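(* Let $\mathcal{I}$ be an independent configuration of $d$ doors in which every door has the same fundamental distribution $p$, and let $A_{\mathrm{simp}}=(1,2,\dots,d)^\infty$ be the knock sequence that repeatedly knocks on doors $1,2,\dots,d$ in order. Let $X_1,\dots,X_d$ be i.i.d. positive-integer-valued random variables with $\Pr[X_i>n]=p(n)$ for all $n$. Then $$\mathbb{T}_{\mathcal{I}}(A_{\mathrm{simp}})=\Theta\big(d\cdot\mathbb{E}[\max\{X_1,\dots,X_d\}]\big),$$ with universal constants.
   Context: Doors $1,\dots,d$ ($d\ge2$) are initially closed and stay open once opened. In an independent configuration each door $i$ behaves independently of all other doors: $p(n)$ is the probability that a door is still closed after $n$ knocks on it ($p(0)=1$, $p$ non-increasing, $\sum_n p(n)<\infty$), and doors are mutually independent. A knock sequence is executed in order without any feedback; $\mathbb{T}_{\mathcal{I}}(\pi)$ denotes the expected number of knocks until all $d$ doors are open when running the sequence $\pi$. *)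

theory Defs
  imports "HOL-Probability.Probability"
begin

text \<open>Doors are indexed by 0,...,d-1. A knock sequence is a map pi :: nat => nat;
  pi t is the door knocked at step t (steps 0,1,2,...).\<close>

definition knocks :: "(nat \<Rightarrow> nat) \<Rightarrow> nat \<Rightarrow> nat \<Rightarrow> nat" where
  "knocks \<pi> i t = card {s. s < t \<and> \<pi> s = i}"

text \<open>y i = number of knocks door i needs before it opens (random, with
  Pr[y i > n] = p n). All d doors are open after the first t knocks iff:\<close>

definition all_open :: "nat \<Rightarrow> (nat \<Rightarrow> nat) \<Rightarrow> (nat \<Rightarrow> nat) \<Rightarrow> nat \<Rightarrow> bool" where
  "all_open d \<pi> y t \<longleftrightarrow> (\<forall>i<d. y i \<le> knocks \<pi> i t)"

definition finish_time :: "nat \<Rightarrow> (nat \<Rightarrow> nat) \<Rightarrow> (nat \<Rightarrow> nat) \<Rightarrow> ennreal" where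
  "finish_time d \<pi> y =
     (if \<exists>t. all_open d \<pi> y t then of_nat (LEAST t. all_open d \<pi> y t) else \<infinity>)"

text \<open>Independent configuration: the opening thresholds of the d doors are
  i.i.d. with distribution D (so Pr[door closed after n knocks] = Pr[D > n]).
  Expected number of knocks T_I(pi).\<close>

definition expected_time :: "nat \<Rightarrow> nat pmf \<Rightarrow> (nat \<Rightarrow> nat) \<Rightarrow> ennreal" where
  "expected_time d D \<pi> = (\<integral>\<^sup>+ y. finish_time d \<pi> y \<partial>(measure_pmf (Pi_pmf {..<d} 0 (\<lambda>_. D))))"

definition A_simp :: "nat \<Rightarrow> nat \<Rightarrow> nat" where
  "A_simp d t = t mod d"

definition expected_max :: "nat \<Rightarrow> nat pmf \<Rightarrow> ennreal" where
  "expected_max d X = (\<integral>\<^sup>+ x. of_nat (Max (x ` {..<d})) \<partial>(measure_pmf (Pi_pmf {..<d} 0 (\<lambda>_. X))))"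

end

theory Submission
  imports Defs
begin

text \<open>For thresholds y with maximum M \<ge> 1, round robin has opened every door after
  M d knocks, since by then each door was knocked exactly M times. Conversely, a
  time t at which all doors are open must exceed (M - 1) d, as the door with
  threshold M has received at most M - 1 knocks by then, and must be at least d,
  as every door was knocked at least once; hence M d \<le> 2 t. Taking expectations
  gives d E[max] / 2 \<le> T(A_simp) \<le> d E[max].\<close>

lemma knocks_mono:
  assumes "t \<le> t'"
  shows "knocks \<pi> i t \<le> knocks \<pi> i t'"
  unfolding knocks_def using assms by (intro card_mono) auto

lemma knocks_A_simp_mult:
  assumes "i < d"
  shows "knocks (A_simp d) i (K * d) = K"
proof -
  have "{s. s < K * d \<and> s mod d = i} = (\<lambda>k. k * d + i) ` {..<K}"
  proof (intro equalityI subsetI)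
    fix s assume s: "s \<in> {s. s < K * d \<and> s mod d = i}"
    then have "s div d < K"
      by (simp add: less_mult_imp_div_less)
    moreover have "s = s div d * d + i"
      using s div_mult_mod_eq[of s d] by simp
    ultimately show "s \<in> (\<lambda>k. k * d + i) ` {..<K}"
      by blast
  next
    fix s assume "s \<in> (\<lambda>k. k * d + i) ` {..<K}"
    then obtain k where k: "k < K" "s = k * d + i"
      by auto
    have "k * d + i < Suc k * d"
      using assms by simp
    also have "\<dots> \<le> K * d"
      using k by (intro mult_right_mono) auto
    finally show "s \<in> {s. s < K * d \<and> s mod d = i}"
      using k assms by simp
  qed
  moreover have "inj_on (\<lambda>k. k * d + i) {..<K}"
    using assms by (intro inj_onI) simp
  ultimately show ?thesis
    by (simp add: knocks_def A_simp_def card_image)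
qed

lemma knocks_A_simp_le:
  assumes "i < d" "t \<le> K * d"
  shows "knocks (A_simp d) i t \<le> K"
  using knocks_mono[OF assms(2), of "A_simp d" i] knocks_A_simp_mult[OF assms(1)] by simp

lemma knocks_A_simp_pos_imp_less:
  assumes "i < d" "0 < knocks (A_simp d) i t"
  shows "i < t"
proof -
  have "{s. s < t \<and> s mod d = i} \<noteq> {}"
    using assms(2) unfolding knocks_def A_simp_def by (metis card.empty less_irrefl)
  then obtain s where "s < t" "s mod d = i"
    by blast
  then show ?thesis
    using assms(1) mod_less_eq_dividend[of s d] by linarith
qed

lemma all_open_A_simp:
  assumes "\<forall>i<d. y i \<le> M"
  shows "all_open d (A_simp d) y (M * d)"
  using assms knocks_A_simp_mult by (simp add: all_open_def)

lemma all_open_A_simp_lower_bound: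
  assumes "0 < d" and pos: "\<forall>i<d. 0 < y i" and "all_open d (A_simp d) y t"
  shows "Max (y ` {..<d}) * d \<le> 2 * t"
proof -
  obtain i0 where i0: "i0 < d" "y i0 = Max (y ` {..<d})"
    using Max_in[of "y ` {..<d}"] \<open>0 < d\<close> by fastforce
  from \<open>all_open d (A_simp d) y t\<close> have open_i: "y i \<le> knocks (A_simp d) i t" if "i < d" for i
    using that by (simp add: all_open_def)
  obtain m where m: "y i0 = Suc m"
    using pos i0(1) not0_implies_Suc by blast
  have "m * d < t"
    using knocks_A_simp_le[OF i0(1), of t m] open_i[OF i0(1)] m by linarith
  moreover have "d - 1 < t"
  proof (rule knocks_A_simp_pos_imp_less)
    show "d - 1 < d"
      using \<open>0 < d\<close> by simp
    then show "0 < knocks (A_simp d) (d - 1) t"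
      using pos open_i order_less_le_trans by blast
  qed
  moreover have "Max (y ` {..<d}) * d = m * d + d"
    unfolding i0(2)[symmetric] m by simp
  ultimately show ?thesis
    by linarith
qed

lemma finish_time_A_simp_le:
  "finish_time d (A_simp d) y \<le> of_nat (Max (y ` {..<d}) * d)"
proof -
  have ex: "all_open d (A_simp d) y (Max (y ` {..<d}) * d)"
    by (intro all_open_A_simp) auto
  then have "(LEAST t. all_open d (A_simp d) y t) \<le> Max (y ` {..<d}) * d"
    by (rule Least_le)
  with ex show ?thesis
    by (auto simp: finish_time_def simp del: of_nat_mult)
qed

lemma finish_time_A_simp_ge:
  assumes "0 < d" "\<forall>i<d. 0 < y i"
  shows "of_nat (Max (y ` {..<d}) * d) \<le> 2 * finish_time d (A_simp d) y"
proof -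
  have ex: "all_open d (A_simp d) y (Max (y ` {..<d}) * d)"
    by (intro all_open_A_simp) auto
  have "Max (y ` {..<d}) * d \<le> 2 * (LEAST t. all_open d (A_simp d) y t)"
    using all_open_A_simp_lower_bound[OF assms LeastI[of "all_open d (A_simp d) y", OF ex]] .
  then have "(of_nat (Max (y ` {..<d}) * d) :: ennreal)
      \<le> of_nat (2 * (LEAST t. all_open d (A_simp d) y t))"
    by (simp only: of_nat_le_iff)
  with ex show ?thesis
    by (auto simp: finish_time_def)
qed

lemma expected_time_A_simp_le:
  "expected_time d X (A_simp d) \<le> of_nat d * expected_max d X"
proof -
  have "expected_time d X (A_simp d)
      \<le> (\<integral>\<^sup>+ y. of_nat d * of_nat (Max (y ` {..<d})) \<partial>measure_pmf (Pi_pmf {..<d} 0 (\<lambda>_. X)))"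
    unfolding expected_time_def
    using finish_time_A_simp_le by (intro nn_integral_mono) (simp add: mult.commute)
  then show ?thesis
    by (simp add: expected_max_def nn_integral_cmult)
qed

lemma expected_max_le_expected_time_A_simp:
  assumes "0 < d" "0 \<notin> set_pmf X"
  shows "of_nat d * expected_max d X \<le> 2 * expected_time d X (A_simp d)"
proof -
  have "of_nat d * expected_max d X
      = (\<integral>\<^sup>+ y. of_nat (Max (y ` {..<d}) * d) \<partial>measure_pmf (Pi_pmf {..<d} 0 (\<lambda>_. X)))"
    by (simp add: expected_max_def nn_integral_cmult mult.commute)
  also have "\<dots> \<le> (\<integral>\<^sup>+ y. 2 * finish_time d (A_simp d) y \<partial>measure_pmf (Pi_pmf {..<d} 0 (\<lambda>_. X)))"
  proof (intro nn_integral_mono_AE AE_pmfI finish_time_A_simp_ge[OF \<open>0 < d\<close>] allI impI)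
    fix y i assume "y \<in> set_pmf (Pi_pmf {..<d} 0 (\<lambda>_. X))" "i < d"
    then show "0 < y i"
      using assms(2) by (fastforce simp: set_Pi_pmf PiE_dflt_def)
  qed
  also have "\<dots> = 2 * expected_time d X (A_simp d)"
    by (simp add: expected_time_def nn_integral_cmult)
  finally show ?thesis .
qed

theorem mainTheorem3:
  shows "\<exists>c C :: real. c > 0 \<and> C > 0 \<and>
    (\<forall>(d::nat) (p::nat \<Rightarrow> real) (X::nat pmf).
       d \<ge> 2 \<longrightarrow> p 0 = 1 \<longrightarrow> antimono p \<longrightarrow> summable p \<longrightarrow>
       (\<forall>n. measure_pmf.prob X {m. n < m} = p n) \<longrightarrow>
       ennreal (c * real d) * expected_max d X \<le> expected_time d X (A_simp d) \<and>
       expected_time d X (A_simp d) \<le> ennreal (C * real d) * expected_max d X)"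
proof -
  have "ennreal (1/2 * real d) * expected_max d X \<le> expected_time d X (A_simp d) \<and>
        expected_time d X (A_simp d) \<le> ennreal (1 * real d) * expected_max d X"
    if "d \<ge> 2" "p 0 = 1" "\<forall>n. measure_pmf.prob X {m. n < m} = p n"
    for d :: nat and p :: "nat \<Rightarrow> real" and X :: "nat pmf"
  proof
    have "measure_pmf.prob X {m. 0 < m} = 1"
      using that by simp
    then have "0 \<notin> set_pmf X"
      by (auto simp: measure_pmf.prob_eq_1 AE_measure_pmf_iff)
    then have "of_nat d * expected_max d X \<le> 2 * expected_time d X (A_simp d)"
      using \<open>d \<ge> 2\<close> by (intro expected_max_le_expected_time_A_simp) auto
    then have "ennreal (1/2) * (of_nat d * expected_max d X)
        \<le> ennreal (1/2) * (2 * expected_time d X (A_simp d))"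
      by (rule mult_left_mono) simp
    moreover have "ennreal (1/2) * 2 = ennreal (1/2 * 2)"
      by (simp only: ennreal_mult'' ennreal_numeral[symmetric])
    moreover have "ennreal (1/2 * real d) * expected_max d X
        = ennreal (1/2) * (of_nat d * expected_max d X)"
      by (subst ennreal_mult) (auto simp: ennreal_of_nat_eq_real_of_nat mult.assoc)
    ultimately show "ennreal (1/2 * real d) * expected_max d X \<le> expected_time d X (A_simp d)"
      by (simp add: mult.assoc[symmetric])
    show "expected_time d X (A_simp d) \<le> ennreal (1 * real d) * expected_max d X"
      using expected_time_A_simp_le by (simp add: ennreal_of_nat_eq_real_of_nat)
  qed
  then show ?thesis
    by (intro exI[of _ "1/2"] exI[of _ 1]) auto
qed

end
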